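(* For every $n\in\mathbb{N}$, \[ \frac{2n+1}{n+1}\,{}_3F_2\!\left(1,1,2n+2;\,2,n+2;\,\tfrac12\right)=H_n+2\log 2. \]
   Context: Pochhammer symbol: $(\alpha)_0=1$, $(\alpha)_k=\alpha(\alpha+1)\cdots(\alpha+k-1)$. ${}_3F_2(a,b,c;d,e;z)=\sum_{k\ge0}\frac{(a)_k(b)_k(c)_k}{(d)_k(e)_k}\frac{z^k}{k!}$. $H_n=\sum_{k=1}^{n}\frac1k$ ($H_0=0$). *)

theory Defs
  imports "HOL-Analysis.Analysis"
begin

definition hyp3F2 :: "real \<Rightarrow> real \<Rightarrow> real \<Rightarrow> real \<Rightarrow> real \<Rightarrow> real \<Rightarrow> real" where
  "hyp3F2 a b c d e z =
     (\<Sum>k. pochhammer a k * pochhammer b k * pochhammer c k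
            / (pochhammer d k * pochhammer e k) * z ^ k / fact k)"

end

theory Submission
  imports Defs
begin

text \<open>
  The k-th term of the series is \<open>w\<^sub>n(k)/(k+1)\<close> with
  \<open>w\<^sub>n(k) = (2n+2)\<^sub>k / ((n+2)\<^sub>k 2\<^sup>k)\<close>.  A contiguous relation in \<open>n\<close> writes the series
  for \<open>n+1\<close> as the series for \<open>n\<close> plus the telescoping series
  \<open>\<Sum>\<^sub>k (w\<^sub>n(k) - w\<^sub>n(k+1))/(n+1) = w\<^sub>n(0)/(n+1) = 1/(n+1)\<close>, which accounts for the
  step \<open>H\<^sub>n \<mapsto> H\<^sub>n\<^sub>+\<^sub>1\<close>.  For \<open>n = 0\<close> the series is \<open>\<Sum>\<^sub>k 2\<^sup>-\<^sup>k/(k+1) = 2 log 2\<close>.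
\<close>

definition hyp_weight :: "nat \<Rightarrow> nat \<Rightarrow> real" where
  "hyp_weight n k = pochhammer (2 * real n + 2) k / pochhammer (real n + 2) k / 2 ^ k"

lemma pochhammer_plus_1:
  fixes a :: "'a :: field"
  assumes "a \<noteq> 0"
  shows "pochhammer (a + 1) k = pochhammer a k * (a + of_nat k) / a"
  using pochhammer_rec[of a k] pochhammer_Suc[of a k] assms by (simp add: field_simps)

lemma hyp_weight_pos: "hyp_weight n k > 0"
  unfolding hyp_weight_def by (intro divide_pos_pos pochhammer_pos) auto

lemma hyp_weight_0 [simp]: "hyp_weight n 0 = 1"
  by (simp add: hyp_weight_def)

lemma hyp_weight_Suc_right:
  "hyp_weight n (Suc k) = hyp_weight n k * (2 * real n + 2 + k) / (2 * (real n + 2 + k))"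
  unfolding hyp_weight_def pochhammer_Suc
  using pochhammer_pos[of "real n + 2" k] by (simp add: field_simps)

lemma hyp_weight_Suc_left:
  "hyp_weight (Suc n) k = hyp_weight n k * ((2 * real n + 2 + k) * (2 * real n + 3 + k) * (real n + 2))
     / ((2 * real n + 2) * (2 * real n + 3) * (real n + 2 + k))"
proof -
  have top: "pochhammer (2 * real (Suc n) + 2) k
      = pochhammer (2 * real n + 2) k * (2 * real n + 2 + k) / (2 * real n + 2)
        * (2 * real n + 3 + k) / (2 * real n + 3)"
    using pochhammer_plus_1[of "2 * real n + 2" k] pochhammer_plus_1[of "2 * real n + 3" k]
    by (simp add: algebra_simps)
  have bottom: "pochhammer (real (Suc n) + 2) k
      = pochhammer (real n + 2) k * (real n + 2 + k) / (real n + 2)"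
    using pochhammer_plus_1[of "real n + 2" k] by (simp add: add_ac)
  show ?thesis
    unfolding hyp_weight_def top bottom
    using pochhammer_pos[of "real n + 2" k] by (simp add: divide_simps)
qed

lemma summable_hyp_weight: "summable (hyp_weight n)"
proof (rule summable_ratio_test[where c = "3/4" and N = n])
  fix k assume "k \<ge> n"
  then have "(2 * real n + 2 + k) / (2 * (real n + 2 + k)) \<le> 3/4"
    by (simp add: divide_simps)
  then have "hyp_weight n (Suc k) \<le> hyp_weight n k * (3/4)"
    unfolding hyp_weight_Suc_right times_divide_eq_right[symmetric]
    using hyp_weight_pos[of n k] by (intro mult_left_mono) auto
  then show "norm (hyp_weight n (Suc k)) \<le> 3/4 * norm (hyp_weight n k)"
    using hyp_weight_pos[of n k] hyp_weight_pos[of n "Suc k"] by simp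
qed simp

lemma summable_hyp_weight_div: "summable (\<lambda>k. hyp_weight n k / (k + 1))"
proof (rule summable_comparison_test[OF exI[of _ 0] summable_hyp_weight], intro allI impI)
  fix k :: nat
  have "hyp_weight n k / (k + 1) \<le> hyp_weight n k"
    using hyp_weight_pos[of n k] by (simp add: divide_simps)
  then show "norm (hyp_weight n k / (k + 1)) \<le> hyp_weight n k"
    using hyp_weight_pos[of n k] by simp
qed

lemma hyp_weight_contiguous:
  "(2 * real (Suc n) + 1) / (real (Suc n) + 1) * (hyp_weight (Suc n) k / (k + 1))
   = (2 * real n + 1) / (real n + 1) * (hyp_weight n k / (k + 1))
     + (hyp_weight n k - hyp_weight n (Suc k)) / (real n + 1)"
proof -
  have "(2 * (x + 1) + 1) / ((x + 1) + 1)
          * (w * ((2 * x + 2 + y) * (2 * x + 3 + y) * (x + 2))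
             / ((2 * x + 2) * (2 * x + 3) * (x + 2 + y)) / (y + 1))
        = (2 * x + 1) / (x + 1) * (w / (y + 1))
          + (w - w * (2 * x + 2 + y) / (2 * (x + 2 + y))) / (x + 1)"
    if "x \<ge> 0" "y \<ge> 0" for x y w :: real
    using that by (simp add: divide_simps) (simp add: algebra_simps)
  from this[of "real n" "real k" "hyp_weight n k"] show ?thesis
    unfolding hyp_weight_Suc_left hyp_weight_Suc_right by (simp add: add_ac)
qed

lemma sums_power_Suc_div_Suc:
  fixes x :: real
  assumes "\<bar>x\<bar> < 1"
  shows "(\<lambda>k. x ^ Suc k / real (Suc k)) sums - ln (1 - x)"
proof -
  have "(\<lambda>k. - (x ^ k) / real k) sums ln (1 - x)"
    using ln_series'[of "- x"] assms by simp
  then have "(\<lambda>k. x ^ k / real k) sums - ln (1 - x)"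
    using sums_minus by fastforce
  then show ?thesis
    by (subst sums_Suc_iff) simp
qed

lemma hyp_weight_series_sums_0: "(\<lambda>k. hyp_weight 0 k / (k + 1)) sums (2 * ln 2)"
proof -
  have "(\<lambda>k. 2 * ((1/2) ^ Suc k / real (Suc k))) sums (2 * - ln (1 - 1/2))"
    by (intro sums_mult sums_power_Suc_div_Suc) simp
  moreover have "2 * ((1/2) ^ Suc k / real (Suc k)) = hyp_weight 0 k / (k + 1)" for k
    using pochhammer_pos[of "2::real" k] by (simp add: hyp_weight_def divide_simps)
  ultimately show ?thesis
    by (simp add: ln_div)
qed

lemma hyp_weight_series_sums:
  "(\<lambda>k. (2 * real n + 1) / (real n + 1) * (hyp_weight n k / (k + 1))) sums (harm n + 2 * ln 2)"
proof (induction n)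
  case 0
  show ?case
    using hyp_weight_series_sums_0 by (simp add: harm_def)
next
  case (Suc n)
  have "(\<lambda>k. hyp_weight n k / (real n + 1)) \<longlonglongrightarrow> 0"
    using summable_LIMSEQ_zero[OF summable_hyp_weight] by (intro tendsto_divide_zero)
  then have "(\<lambda>k. hyp_weight n k / (real n + 1) - hyp_weight n (Suc k) / (real n + 1))
      sums (1 / (real n + 1))"
    using telescope_sums' by fastforce
  from sums_add[OF Suc.IH this] show ?case
    unfolding diff_divide_distrib[symmetric] hyp_weight_contiguous[symmetric]
    by (simp add: harm_Suc inverse_eq_divide ac_simps)
qed

lemma hyp3F2_summand:
  "pochhammer 1 k * pochhammer 1 k * pochhammer (2 * real n + 2) k
     / (pochhammer 2 k * pochhammer (real n + 2) k) * (1/2) ^ k / fact k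
   = hyp_weight n k / (k + 1)"
proof -
  have "pochhammer (2::real) k = fact (Suc k)"
    using pochhammer_rec[of "1::real" k] by (simp add: pochhammer_fact)
  then show ?thesis
    using pochhammer_pos[of "real n + 2" k]
    by (simp add: hyp_weight_def pochhammer_fact[symmetric] divide_simps)
qed

theorem mainTheorem14:
  fixes n :: nat
  shows "(2 * real n + 1) / (real n + 1)
           * hyp3F2 1 1 (2 * real n + 2) 2 (real n + 2) (1/2)
         = harm n + 2 * ln 2"
proof -
  have "hyp3F2 1 1 (2 * real n + 2) 2 (real n + 2) (1/2) = (\<Sum>k. hyp_weight n k / (k + 1))"
    unfolding hyp3F2_def hyp3F2_summand ..
  moreover have "(\<lambda>k. (2 * real n + 1) / (real n + 1) * (hyp_weight n k / (k + 1)))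
      sums ((2 * real n + 1) / (real n + 1) * (\<Sum>k. hyp_weight n k / (k + 1)))"
    by (intro sums_mult summable_sums summable_hyp_weight_div)
  ultimately show ?thesis
    using sums_unique2[OF _ hyp_weight_series_sums] by simp
qed

end
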